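(* Let $I=[0,1]$ and $f_{1,\infty}$ an $m$-periodic sequence of continuous self-maps of $I$. If $(I,f_{1,\infty})$ is sensitive, then it is syndetically sensitive, ergodically sensitive, collectively sensitive and multi-sensitive.
   Context: $m$-periodic: $f_{n+m}=f_n$ for all $n$. Write $f_1^n=f_n\circ\cdots\circ f_1$ and, for open $U$ and $\delta>0$, $N_{f_{1,\infty}}(U,\delta)=\{n\in\mathbb{N}:\exists x,y\in U,\ |f_1^n(x)-f_1^n(y)|>\delta\}$. Sensitive: there is $\delta>0$ such that for every $x\in I$ and neighbourhood $U$ of $x$ there are $y\in U$, $n\in\mathbb{N}$ with $|f_1^n(x)-f_1^n(y)|>\delta$. A set $F\subseteq\mathbb{N}$ is syndetic if there is $a\in\mathbb{N}$ with $\{i,\dots,i+a\}\cap F\ne\emptyset$ for all $i$; upper density $\overline{d}(S)=\limsup_{n\to\infty}\frac1n|S\cap\{0,\dots,n-1\}|$. Syndetically (resp. ergodically) sensitive: there is $\delta>0$ with $N_{f_{1,\infty}}(U,\delta)$ syndetic (resp. of positive upper density) for every non-empty open $U$. Multi-sensitive: there is $\delta>0$ such that for every $k$ and non-empty open $V_1,\dots,V_k$, $\bigcap_{i=1}^kN_{f_{1,\infty}}(V_i,\delta)\ne\emptyset$. Collectively sensitive: there is $\delta>0$ such that for any points $x_1,\dots,x_k\in I$ and any $\epsilon>0$ there exist $y_1,\dots,y_k$ with $|x_i-y_i|<\epsilon$, $n\in\mathbb{N}$ and $i_0\in\{1,\dots,k\}$ such that for each $i$, $|f_1^n(x_i)-f_1^n(y_{i_0})|>\delta$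 or $|f_1^n(y_i)-f_1^n(x_{i_0})|>\delta$. *)

theory Defs
  imports "HOL-Analysis.Analysis" "HOL-Library.Liminf_Limsup"
begin

text \<open>A non-autonomous system on I = [0,1] is given by maps f 1, f 2, ... :: real => real
  (the value f 0 is irrelevant). The composition f_1^n = f n o ... o f 1, f_1^0 = id.\<close>

fun iter_comp :: "(nat \<Rightarrow> real \<Rightarrow> real) \<Rightarrow> nat \<Rightarrow> real \<Rightarrow> real" where
  "iter_comp f 0 = id"
| "iter_comp f (Suc n) = f (Suc n) \<circ> iter_comp f n"

definition I01 :: "real set" where "I01 = {0..1}"

definition periodic_seq :: "(nat \<Rightarrow> real \<Rightarrow> real) \<Rightarrow> nat \<Rightarrow> bool" where
  "periodic_seq f m \<longleftrightarrow> m \<ge> 1 \<and> (\<forall>n\<ge>1. f (n + m) = f n)"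

definition cont_self_maps :: "(nat \<Rightarrow> real \<Rightarrow> real) \<Rightarrow> bool" where
  "cont_self_maps f \<longleftrightarrow> (\<forall>n\<ge>1. continuous_on I01 (f n) \<and> f n ` I01 \<subseteq> I01)"

definition Nset :: "(nat \<Rightarrow> real \<Rightarrow> real) \<Rightarrow> real set \<Rightarrow> real \<Rightarrow> nat set" where
  "Nset f U \<delta> = {n. n \<ge> 1 \<and> (\<exists>x\<in>U. \<exists>y\<in>U. \<bar>iter_comp f n x - iter_comp f n y\<bar> > \<delta>)}"

definition syndetic :: "nat set \<Rightarrow> bool" where
  "syndetic F \<longleftrightarrow> (\<exists>a. \<forall>i. {i..i+a} \<inter> F \<noteq> {})"

definition upper_density :: "nat set \<Rightarrow> ereal" where
  "upper_density S = limsup (\<lambda>n. ereal (real (card (S \<inter> {0..<n})) / real n))"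

definition sensitive :: "(nat \<Rightarrow> real \<Rightarrow> real) \<Rightarrow> bool" where
  "sensitive f \<longleftrightarrow> (\<exists>\<delta>>0. \<forall>x\<in>I01. \<forall>U. openin (top_of_set I01) U \<and> x \<in> U \<longrightarrow>
      (\<exists>y\<in>U. \<exists>n\<ge>1. \<bar>iter_comp f n x - iter_comp f n y\<bar> > \<delta>))"

definition syndetically_sensitive :: "(nat \<Rightarrow> real \<Rightarrow> real) \<Rightarrow> bool" where
  "syndetically_sensitive f \<longleftrightarrow> (\<exists>\<delta>>0. \<forall>U. openin (top_of_set I01) U \<and> U \<noteq> {} \<longrightarrow>
      syndetic (Nset f U \<delta>))"

definition ergodically_sensitive :: "(nat \<Rightarrow> real \<Rightarrow> real) \<Rightarrow> bool" where
  "ergodically_sensitive f \<longleftrightarrow> (\<exists>\<delta>>0. \<forall>U. openin (top_of_set I01) U \<and> U \<noteq> {} \<longrightarrow>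
      upper_density (Nset f U \<delta>) > 0)"

definition multi_sensitive :: "(nat \<Rightarrow> real \<Rightarrow> real) \<Rightarrow> bool" where
  "multi_sensitive f \<longleftrightarrow> (\<exists>\<delta>>0. \<forall>k\<ge>1. \<forall>V :: nat \<Rightarrow> real set.
      (\<forall>i\<in>{1..k}. openin (top_of_set I01) (V i) \<and> V i \<noteq> {}) \<longrightarrow>
      (\<Inter>i\<in>{1..k}. Nset f (V i) \<delta>) \<noteq> {})"

definition collectively_sensitive :: "(nat \<Rightarrow> real \<Rightarrow> real) \<Rightarrow> bool" where
  "collectively_sensitive f \<longleftrightarrow> (\<exists>\<delta>>0. \<forall>k\<ge>1. \<forall>x :: nat \<Rightarrow> real. \<forall>\<epsilon>>0.
      (\<forall>i\<in>{1..k}. x i \<in> I01) \<longrightarrow>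
      (\<exists>y :: nat \<Rightarrow> real. \<exists>n\<ge>1. \<exists>i0\<in>{1..k}.
         (\<forall>i\<in>{1..k}. y i \<in> I01 \<and> \<bar>x i - y i\<bar> < \<epsilon>) \<and>
         (\<forall>i\<in>{1..k}. \<bar>iter_comp f n (x i) - iter_comp f n (y i0)\<bar> > \<delta> \<or>
                       \<bar>iter_comp f n (y i) - iter_comp f n (x i0)\<bar> > \<delta>)))"

end

theory Submission
  imports Defs
begin

text \<open>Points separated by more than \<delta> beyond one period m are, by equicontinuity of
  F 0, ..., F m, already far apart after a whole number of periods; so the return map F m
  sends every nondegenerate interval, after some iterations, onto a set containing a cell of
  a fixed finite grid. Following the cells covered by a cell one reaches a cell J with
  J \<subseteq> F (P m) J. As no F t is constant on an interval, the finitely many separations of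
  F t on such cells for t < P m give one \<eta> for which every N(U, \<eta>) is cofinite. Cofinite
  sets are syndetic, have positive upper density, and finitely many of them intersect;
  collective sensitivity follows from sensitivity alone.\<close>

definition cofinitely_sensitive :: "(nat \<Rightarrow> real \<Rightarrow> real) \<Rightarrow> bool" where
  "cofinitely_sensitive f \<longleftrightarrow> (\<exists>\<delta>>0. \<forall>U. openin (top_of_set I01) U \<and> U \<noteq> {} \<longrightarrow>
      (\<forall>\<^sub>F n in sequentially. n \<in> Nset f U \<delta>))"

lemma syndetic_if_eventually:
  assumes "\<forall>\<^sub>F n in sequentially. n \<in> S"
  shows "syndetic S"
proof -
  obtain N where "\<forall>n\<ge>N. n \<in> S" using assms by (auto simp: eventually_sequentially)
  then have "i + N \<in> {i..i+N} \<inter> S" for i by auto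
  then show ?thesis unfolding syndetic_def by blast
qed

lemma upper_density_pos_if_eventually:
  assumes "\<forall>\<^sub>F n in sequentially. n \<in> S"
  shows "upper_density S > 0"
proof -
  obtain N where N: "\<forall>n\<ge>N. n \<in> S" using assms by (auto simp: eventually_sequentially)
  have "\<forall>\<^sub>F n in sequentially. ereal (1/2) \<le> ereal (real (card (S \<inter> {0..<n})) / real n)"
  proof (rule eventually_sequentiallyI[of "2*N+1"])
    fix n assume n: "2*N+1 \<le> n"
    have "{N..<n} \<subseteq> S \<inter> {0..<n}" using N by auto
    then have "card {N..<n} \<le> card (S \<inter> {0..<n})" by (intro card_mono) auto
    then have "real n - real N \<le> real (card (S \<inter> {0..<n}))" using n by simp
    then show "ereal (1/2) \<le> ereal (real (card (S \<inter> {0..<n})) / real n)"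
      using n by (simp add: field_simps)
  qed
  then have "ereal (1/2) \<le> upper_density S"
    unfolding upper_density_def by (rule le_Limsup[rotated]) simp
  then show ?thesis by (rule order.strict_trans2[rotated]) simp
qed

lemma cofinitely_sensitive_imp_syndetically_sensitive:
  "cofinitely_sensitive f \<Longrightarrow> syndetically_sensitive f"
  unfolding cofinitely_sensitive_def syndetically_sensitive_def
  by (metis syndetic_if_eventually)

lemma cofinitely_sensitive_imp_ergodically_sensitive:
  "cofinitely_sensitive f \<Longrightarrow> ergodically_sensitive f"
  unfolding cofinitely_sensitive_def ergodically_sensitive_def
  by (metis upper_density_pos_if_eventually)

lemma cofinitely_sensitive_imp_multi_sensitive:
  assumes "cofinitely_sensitive f"
  shows "multi_sensitive f"
proof -
  obtain \<delta> where \<delta>: "\<delta> > 0" and cofinite: "\<And>U. openin (top_of_set I01) U \<Longrightarrow> U \<noteq> {} \<Longrightarrow>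
      \<forall>\<^sub>F n in sequentially. n \<in> Nset f U \<delta>"
    using assms unfolding cofinitely_sensitive_def by blast
  have "(\<Inter>i\<in>{1..k}. Nset f (V i) \<delta>) \<noteq> {}"
    if V: "\<forall>i\<in>{1..k}. openin (top_of_set I01) (V i) \<and> V i \<noteq> {}" for k and V :: "nat \<Rightarrow> real set"
  proof -
    have "\<forall>\<^sub>F n in sequentially. \<forall>i\<in>{1..k}. n \<in> Nset f (V i) \<delta>"
      using V cofinite by (intro eventually_ball_finite) auto
    then obtain N where "\<forall>i\<in>{1..k}. N \<in> Nset f (V i) \<delta>"
      by (auto simp: eventually_sequentially)
    then show ?thesis by blast
  qed
  then show ?thesis unfolding multi_sensitive_def using \<delta> by blast
qed

text \<open>Only the first point is perturbed; the other points are then far from its image or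
  its perturbation by the triangle inequality.\<close>
lemma sensitive_imp_collectively_sensitive:
  assumes "sensitive f"
  shows "collectively_sensitive f"
proof -
  let ?F = "iter_comp f"
  obtain \<delta> where \<delta>: "\<delta> > 0" and sens: "\<forall>x\<in>I01. \<forall>U. openin (top_of_set I01) U \<and> x \<in> U \<longrightarrow>
      (\<exists>y\<in>U. \<exists>n\<ge>1. \<bar>?F n x - ?F n y\<bar> > \<delta>)"
    using assms unfolding sensitive_def by blast
  have "\<exists>y n. n \<ge> 1 \<and> (\<exists>i0\<in>{1..k}. (\<forall>i\<in>{1..k}. y i \<in> I01 \<and> \<bar>x i - y i\<bar> < \<epsilon>) \<and>
         (\<forall>i\<in>{1..k}. \<bar>?F n (x i) - ?F n (y i0)\<bar> > \<delta>/2 \<or> \<bar>?F n (y i) - ?F n (x i0)\<bar> > \<delta>/2))"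
    if k: "1 \<le> k" and \<epsilon>: "\<epsilon> > 0" and x: "\<forall>i\<in>{1..k}. x i \<in> I01" for k :: nat and x :: "nat \<Rightarrow> real" and \<epsilon> :: real
  proof -
    define U where "U = I01 \<inter> ball (x 1) \<epsilon>"
    have "x 1 \<in> I01" using k x by auto
    moreover have "openin (top_of_set I01) U" "x 1 \<in> U"
      using \<open>x 1 \<in> I01\<close> \<epsilon> by (auto simp: U_def openin_open_Int)
    ultimately obtain z n where z: "z \<in> U" "n \<ge> 1" "\<bar>?F n (x 1) - ?F n z\<bar> > \<delta>"
      using sens by blast
    define y where "y = x(1 := z)"
    have "\<bar>?F n (x i) - ?F n (y 1)\<bar> > \<delta>/2 \<or> \<bar>?F n (y i) - ?F n (x 1)\<bar> > \<delta>/2" for i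
    proof (cases "i = 1")
      case False
      then have "y 1 = z" "y i = x i" by (simp_all add: y_def)
      then show ?thesis using z(3) by (simp only:) arith
    qed (use z(3) \<delta> in \<open>simp add: y_def\<close>)
    moreover have "y i \<in> I01 \<and> \<bar>x i - y i\<bar> < \<epsilon>" if "i \<in> {1..k}" for i
      using that x z(1) \<epsilon> by (auto simp: y_def U_def dist_real_def)
    ultimately show ?thesis using k z(2) by (intro exI[of _ y] exI[of _ n] conjI bexI[of _ 1]) auto
  qed
  then show ?thesis unfolding collectively_sensitive_def using \<delta> by (intro exI[of _ "\<delta>/2"]) auto
qed

lemma finite_positive_lower_bound:
  fixes P :: "'a \<Rightarrow> real \<Rightarrow> bool"
  assumes "finite S"
    and pos: "\<And>s. s \<in> S \<Longrightarrow> \<exists>d>0. P s d"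
    and mono: "\<And>s d d'. P s d \<Longrightarrow> 0 < d' \<Longrightarrow> d' \<le> d \<Longrightarrow> P s d'"
  shows "\<exists>d>0. \<forall>s\<in>S. P s d"
  using assms(1) pos
proof (induction S rule: finite_induct)
  case empty
  show ?case by (auto intro: exI[of _ 1])
next
  case (insert s S)
  obtain d where d: "d > 0" "\<forall>s\<in>S. P s d" using insert by blast
  obtain e where e: "e > 0" "P s e" using insert by blast
  show ?case
    using d e mono by (intro exI[of _ "min d e"]) auto
qed

text \<open>Otherwise the relation is well-founded on the elements reachable from a, and a minimal
  one has no successor.\<close>
lemma finite_transitive_reaches_loop:
  fixes r :: "'a \<Rightarrow> 'a \<Rightarrow> bool"
  assumes "finite A" "a \<in> A"
    and succ: "\<And>x. x \<in> A \<Longrightarrow> \<exists>y\<in>A. r x y"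
    and trans: "\<And>x y z. r x y \<Longrightarrow> r y z \<Longrightarrow> r x z"
  shows "\<exists>c\<in>A. r a c \<and> r c c"
proof (rule ccontr)
  assume no_loop: "\<not> ?thesis"
  define S where "S = {c \<in> A. r a c}"
  define Q where "Q = {(y, x). x \<in> S \<and> y \<in> S \<and> r x y}"
  have "trans Q" using trans by (auto simp: Q_def trans_def)
  then have "acyclic Q" using no_loop by (auto simp: acyclic_def Q_def S_def)
  moreover have "Q \<subseteq> A \<times> A" by (auto simp: Q_def S_def)
  then have "finite Q" using \<open>finite A\<close> by (blast intro: finite_subset)
  ultimately have "wf Q" by (intro finite_acyclic_wf)
  obtain y where "y \<in> S" using succ[OF \<open>a \<in> A\<close>] by (auto simp: S_def)
  then obtain z where z: "z \<in> S" and minimal: "\<And>w. (w, z) \<in> Q \<Longrightarrow> w \<notin> S"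
    using wfE_min[OF \<open>wf Q\<close>] by blast
  obtain w where "w \<in> A" "r z w" using z succ by (auto simp: S_def)
  then have "w \<in> S" "(w, z) \<in> Q" using z trans by (auto simp: S_def Q_def)
  then show False using minimal by blast
qed

definition covers :: "('a \<Rightarrow> 'a) \<Rightarrow> 'a set \<Rightarrow> 'a set \<Rightarrow> bool" where
  "covers g A B \<longleftrightarrow> (\<exists>k\<ge>1. B \<subseteq> (g ^^ k) ` A)"

lemma image_funpow_add: "(g ^^ (k + l)) ` X = (g ^^ k) ` (g ^^ l) ` X"
  by (simp add: funpow_add image_comp)

lemma subset_image_funpow_add:
  assumes "B \<subseteq> (g ^^ l) ` A" "C \<subseteq> (g ^^ k) ` B"
  shows "C \<subseteq> (g ^^ (k + l)) ` A"
  unfolding image_funpow_add using assms(2) image_mono[OF assms(1)] by (rule order_trans)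

lemma covers_trans:
  assumes "covers g A B" "covers g B C"
  shows "covers g A C"
proof -
  obtain l k where "l \<ge> 1" and l: "B \<subseteq> (g ^^ l) ` A" and k: "C \<subseteq> (g ^^ k) ` B"
    using assms unfolding covers_def by blast
  then have "k + l \<ge> 1" by simp
  with subset_image_funpow_add[OF l k] show ?thesis unfolding covers_def by blast
qed

lemma subset_image_funpow_mult: "A \<subseteq> (g ^^ P) ` A \<Longrightarrow> A \<subseteq> (g ^^ (q * P)) ` A"
proof (induction q)
  case (Suc q)
  then show ?case using subset_image_funpow_add[OF Suc.IH[OF Suc.prems] Suc.prems] by simp
qed simp

definition grid_cell :: "nat \<Rightarrow> nat \<Rightarrow> real set" where
  "grid_cell R c = {real c / real R .. (real c + 1) / real R}"

lemma grid_cell_bounds: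
  "c < R \<Longrightarrow> 0 \<le> real c / real R \<and> real c / real R < (real c + 1) / real R \<and> (real c + 1) / real R \<le> 1"
  by (auto simp: divide_strict_right_mono pos_divide_le_eq)

lemma interval_contains_grid_cell:
  assumes "R > 0" "0 \<le> u" "u + 2 / real R \<le> v" "v \<le> 1"
  shows "\<exists>c<R. grid_cell R c \<subseteq> {u..v}"
proof -
  define c where "c = nat \<lceil>u * real R\<rceil>"
  have R: "real R > 0" using assms by simp
  have "real c = of_int \<lceil>u * real R\<rceil>" using assms by (simp add: c_def)
  then have c: "u * real R \<le> real c" "real c < u * real R + 1" by linarith+
  have lower: "u \<le> real c / real R" using c R by (simp add: pos_le_divide_eq)
  have "(real c + 1) / real R < (u * real R + 2) / real R" using c R by (simp add: divide_strict_right_mono)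
  also have "\<dots> = u + 2 / real R" using R by (simp add: field_simps)
  finally have upper: "(real c + 1) / real R \<le> v" using assms by linarith
  then have "(real c + 1) / real R \<le> 1" using assms by linarith
  then have "real c + 1 \<le> real R" using R by (simp add: pos_divide_le_eq)
  then have "c < R" by linarith
  moreover have "grid_cell R c \<subseteq> {u..v}" using lower upper by (auto simp: grid_cell_def)
  ultimately show ?thesis by blast
qed

lemma openin_I01_contains_interval:
  assumes "openin (top_of_set I01) U" "U \<noteq> {}"
  obtains a b where "0 \<le> a" "a < b" "b \<le> 1" "{a..b} \<subseteq> U"
proof -
  obtain x where x: "x \<in> U" using assms(2) by blast
  obtain V where V: "open V" "U = I01 \<inter> V" using assms(1) unfolding openin_open by blast
  then obtain e where e: "e > 0" "ball x e \<subseteq> V" using x open_contains_ball by blast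
  have x01: "0 \<le> x" "x \<le> 1" using x V by (auto simp: I01_def)
  define a where "a = max 0 (x - e/2)"
  define b where "b = min 1 (x + e/2)"
  have "{a..b} \<subseteq> ball x e" using e by (auto simp: a_def b_def dist_real_def)
  moreover have "{a..b} \<subseteq> I01" by (auto simp: a_def b_def I01_def)
  moreover have "0 \<le> a" "a < b" "b \<le> 1" using e x01 by (auto simp: a_def b_def)
  ultimately show ?thesis using V e by (intro that) auto
qed

lemma openin_I01_Ioo: "0 \<le> a \<Longrightarrow> b \<le> 1 \<Longrightarrow> openin (top_of_set I01) {a<..<b}"
  unfolding openin_open I01_def by (intro exI[of _ "{a<..<b}"]) auto

lemma iter_comp_add: "iter_comp f (s + t) = iter_comp (\<lambda>i. f (i + t)) s \<circ> iter_comp f t"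
  by (induction s) auto

lemma iter_comp_in_I01: "cont_self_maps f \<Longrightarrow> x \<in> I01 \<Longrightarrow> iter_comp f n x \<in> I01"
  by (induction n) (auto simp: cont_self_maps_def image_subset_iff)

lemma continuous_on_iter_comp:
  assumes "cont_self_maps f"
  shows "continuous_on I01 (iter_comp f n)"
proof (induction n)
  case (Suc n)
  have "continuous_on I01 (f (Suc n))" using assms by (simp add: cont_self_maps_def)
  moreover have "iter_comp f n ` I01 \<subseteq> I01" using iter_comp_in_I01[OF assms] by auto
  ultimately have "continuous_on (iter_comp f n ` I01) (f (Suc n))" by (rule continuous_on_subset)
  from continuous_on_compose[OF Suc this] show ?case by simp
qed simp

lemma iter_comp_uniformly_equicontinuous:
  assumes "cont_self_maps f" "\<epsilon> > 0"
  shows "\<exists>\<rho>>0. \<forall>j\<le>T. \<forall>x\<in>I01. \<forall>y\<in>I01. \<bar>x - y\<bar> < \<rho> \<longrightarrow> \<bar>iter_comp f j x - iter_comp f j y\<bar> < \<epsilon>"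
proof -
  have uc: "\<exists>\<rho>>0. \<forall>x\<in>I01. \<forall>y\<in>I01. \<bar>x - y\<bar> < \<rho> \<longrightarrow> \<bar>iter_comp f j x - iter_comp f j y\<bar> < \<epsilon>" for j
  proof -
    have "uniformly_continuous_on I01 (iter_comp f j)"
      using compact_uniformly_continuous[OF continuous_on_iter_comp[OF assms(1)]]
      by (simp add: I01_def)
    then show ?thesis using assms(2) unfolding uniformly_continuous_on_def dist_real_def by metis
  qed
  have "\<exists>\<rho>>0. \<forall>j\<in>{..T}. \<forall>x\<in>I01. \<forall>y\<in>I01. \<bar>x - y\<bar> < \<rho> \<longrightarrow>
      \<bar>iter_comp f j x - iter_comp f j y\<bar> < \<epsilon>"
    by (rule finite_positive_lower_bound[where P = "\<lambda>j \<rho>. \<forall>x\<in>I01. \<forall>y\<in>I01.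
          \<bar>x - y\<bar> < \<rho> \<longrightarrow> \<bar>iter_comp f j x - iter_comp f j y\<bar> < \<epsilon>"]) (use uc in auto)
  then show ?thesis by auto
qed

lemma closed_segment_subset_image_iter_comp:
  assumes "cont_self_maps f" "connected J" "J \<subseteq> I01" "u \<in> J" "v \<in> J"
  shows "closed_segment (iter_comp f n u) (iter_comp f n v) \<subseteq> iter_comp f n ` J"
proof -
  have "continuous_on J (iter_comp f n)"
    using continuous_on_iter_comp[OF assms(1)] assms(3) by (rule continuous_on_subset)
  then have "convex (iter_comp f n ` J)"
    using assms(2) connected_continuous_image connected_convex_1 by blast
  then show ?thesis using assms(4,5) by (intro closed_segment_subset) auto
qed

lemma periodic_seq_shift: "periodic_seq f m \<Longrightarrow> n \<ge> 1 \<Longrightarrow> f (n + k * m) = f n"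
proof (induction k)
  case (Suc k)
  have "f (n + Suc k * m) = f ((n + k * m) + m)" by (simp add: algebra_simps)
  also have "\<dots> = f (n + k * m)" using Suc.prems unfolding periodic_seq_def by simp
  also have "\<dots> = f n" using Suc by simp
  finally show ?case .
qed simp

lemma iter_comp_periodic:
  assumes "periodic_seq f m"
  shows "iter_comp f (n + k * m) = iter_comp f n \<circ> (iter_comp f m ^^ k)"
proof -
  have shift: "iter_comp f (n + k * m) = iter_comp f n \<circ> iter_comp f (k * m)" for n k
  proof (induction n)
    case (Suc n)
    then show ?case using periodic_seq_shift[OF assms, of "Suc n" k] by (simp add: o_assoc)
  qed simp
  have "iter_comp f (k * m) = iter_comp f m ^^ k"
    by (induction k) (auto simp: shift[of m, simplified add.commute] funpow_Suc_right[symmetric] o_assoc)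
  then show ?thesis using shift by simp
qed

locale periodic_system =
  fixes f :: "nat \<Rightarrow> real \<Rightarrow> real" and m :: nat
  assumes periodic: "periodic_seq f m" and self_maps: "cont_self_maps f"
begin

abbreviation F :: "nat \<Rightarrow> real \<Rightarrow> real" where "F \<equiv> iter_comp f"

lemma period_pos: "m \<ge> 1"
  using periodic by (simp add: periodic_seq_def)

text \<open>Writing n - K m = q P m + t with t < P m, the set J lies in the image of X under
  F m ^^ (q P + K), and F n is F t after that map.\<close>
lemma eventually_separated_if_periodic_set:
  assumes reach: "J \<subseteq> (F m ^^ K) ` X" and return: "J \<subseteq> (F m ^^ P) ` J" and "P \<ge> 1"
    and sep: "\<And>t. t < P * m \<Longrightarrow> \<exists>p\<in>J. \<exists>q\<in>J. \<bar>F t p - F t q\<bar> > \<eta>"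
  shows "\<forall>\<^sub>F n in sequentially. \<exists>x\<in>X. \<exists>y\<in>X. \<bar>F n x - F n y\<bar> > \<eta>"
proof (rule eventually_sequentiallyI)
  fix n assume n: "K * m \<le> n"
  define t where "t = (n - K * m) mod (P * m)"
  define j where "j = (n - K * m) div (P * m) * P + K"
  have "t < P * m" using \<open>P \<ge> 1\<close> period_pos by (simp add: t_def)
  then obtain p q where pq: "p \<in> J" "q \<in> J" "\<bar>F t p - F t q\<bar> > \<eta>" using sep by blast
  have "n = t + j * m"
    using n mod_div_mult_eq[of "n - K * m" "P * m"] by (simp add: t_def j_def algebra_simps)
  then have Fn: "F n = F t \<circ> (F m ^^ j)" using iter_comp_periodic[OF periodic] by simp
  have "J \<subseteq> (F m ^^ j) ` X"
    unfolding j_def using subset_image_funpow_add[OF reach subset_image_funpow_mult[OF return]] .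
  then obtain x y where "x \<in> X" "y \<in> X" "p = (F m ^^ j) x" "q = (F m ^^ j) y"
    using pq by blast
  then show "\<exists>x\<in>X. \<exists>y\<in>X. \<bar>F n x - F n y\<bar> > \<eta>" using pq(3) Fn by auto
qed

end

locale sensitive_periodic_system = periodic_system +
  fixes \<delta> :: real
  assumes sensitivity_pos: "\<delta> > 0"
    and sensitive: "\<And>x U. x \<in> I01 \<Longrightarrow> openin (top_of_set I01) U \<Longrightarrow> x \<in> U \<Longrightarrow>
      \<exists>y\<in>U. \<exists>n\<ge>1. \<bar>iter_comp f n x - iter_comp f n y\<bar> > \<delta>"
begin

text \<open>Up to any time T the maps F j are uniformly equicontinuous, so points close enough
  together can only be separated by more than \<delta> after time T.\<close>
lemma separated_after:
  assumes "0 \<le> a" "a < b" "b \<le> 1"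
  shows "\<exists>x\<in>{a..b}. \<exists>y\<in>{a..b}. \<exists>n>T. \<bar>F n x - F n y\<bar> > \<delta>"
proof -
  obtain \<rho> where \<rho>: "\<rho> > 0" and equicont: "\<forall>j\<le>T. \<forall>x\<in>I01. \<forall>y\<in>I01. \<bar>x - y\<bar> < \<rho> \<longrightarrow> \<bar>F j x - F j y\<bar> < \<delta>"
    using iter_comp_uniformly_equicontinuous[OF self_maps sensitivity_pos] by blast
  define a' where "a' = min b (a + \<rho>/2)"
  define x where "x = (a + a') / 2"
  have a': "a < a'" "a' \<le> b" "a' - a \<le> \<rho>/2" using assms \<rho> by (auto simp: a'_def min_def)
  then have x: "x \<in> {a<..<a'}" "x \<in> I01" using assms by (auto simp: x_def I01_def)
  obtain y n where y: "y \<in> {a<..<a'}" "n \<ge> 1" "\<bar>F n x - F n y\<bar> > \<delta>"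
    using sensitive[OF x(2) openin_I01_Ioo x(1)] assms a' by auto
  have "y \<in> I01" "\<bar>x - y\<bar> < \<rho>" using y(1) x(1) a' assms by (auto simp: I01_def)
  then have "n > T" using equicont x(2) y(3) by (meson not_less not_less_iff_gr_or_eq)
  moreover have "x \<in> {a..b}" "y \<in> {a..b}" using x(1) y(1) a' by auto
  ultimately show ?thesis using y(3) by blast
qed

lemma iter_comp_nonconstant:
  assumes "0 \<le> a" "a < b" "b \<le> 1"
  shows "\<exists>x\<in>{a..b}. \<exists>y\<in>{a..b}. F t x \<noteq> F t y"
proof -
  obtain x y n where xy: "x \<in> {a..b}" "y \<in> {a..b}" "n > t" "\<bar>F n x - F n y\<bar> > \<delta>"
    using separated_after[OF assms, of t] by blast
  have "F n = iter_comp (\<lambda>i. f (i + t)) (n - t) \<circ> F t"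
    using iter_comp_add[of f "n - t" t] xy(3) by simp
  then have "F t x \<noteq> F t y" using xy(4) sensitivity_pos by auto
  then show ?thesis using xy(1,2) by blast
qed

text \<open>A separation by more than \<delta> at a time beyond one period, read off after the last full
  period, forces a separation of at least \<rho> at that full period (equicontinuity of F 0, ..., F m);
  the image of the interval then contains the whole segment between the two points, hence a
  cell of mesh 1/R < \<rho>/2.\<close>
lemma interval_covers_grid_cell:
  "\<exists>R>0. \<forall>a b. 0 \<le> a \<longrightarrow> a < b \<longrightarrow> b \<le> 1 \<longrightarrow> (\<exists>c<R. covers (F m) {a..b} (grid_cell R c))"
proof -
  obtain \<rho> where \<rho>: "\<rho> > 0" and equicont: "\<forall>j\<le>m. \<forall>x\<in>I01. \<forall>y\<in>I01. \<bar>x - y\<bar> < \<rho> \<longrightarrow> \<bar>F j x - F j y\<bar> < \<delta>"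
    using iter_comp_uniformly_equicontinuous[OF self_maps sensitivity_pos] by blast
  obtain R :: nat where R: "real R > 2 / \<rho>" using reals_Archimedean2 by blast
  then have "R > 0" using \<rho> by (metis divide_pos_pos gr0I of_nat_0 order_less_asym zero_less_numeral)
  have mesh: "2 / real R < \<rho>" using R \<rho> \<open>R > 0\<close> by (simp add: field_simps)
  have "\<exists>c<R. covers (F m) {a..b} (grid_cell R c)" if ab: "0 \<le> a" "a < b" "b \<le> 1" for a b
  proof -
    obtain x y n where xy: "x \<in> {a..b}" "y \<in> {a..b}" "n > m" "\<bar>F n x - F n y\<bar> > \<delta>"
      using separated_after[OF ab, of m] by blast
    define k where "k = n div m"
    define r where "r = n mod m"
    have "0 < n div m" using xy(3) period_pos by (simp add: div_greater_zero_iff)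
    then have "k \<ge> 1" by (simp add: k_def)
    have "r \<le> m" using period_pos by (simp add: r_def)
    have "n = r + k * m" by (simp add: k_def r_def)
    then have Fn: "F n = F r \<circ> (F m ^^ k)" using iter_comp_periodic[OF periodic] by simp
    have Fk: "F m ^^ k = F (k * m)" using iter_comp_periodic[OF periodic, of 0 k] by simp
    define X where "X = (F m ^^ k) x"
    define Y where "Y = (F m ^^ k) y"
    have "x \<in> I01" "y \<in> I01" using xy ab by (auto simp: I01_def)
    then have XY: "X \<in> I01" "Y \<in> I01"
      unfolding X_def Y_def Fk using iter_comp_in_I01[OF self_maps] by auto
    have "\<not> \<bar>X - Y\<bar> < \<rho>"
      using equicont \<open>r \<le> m\<close> XY xy(4) Fn by (fastforce simp: X_def Y_def)
    then have far: "min X Y + 2 / real R \<le> max X Y" using mesh by (auto simp: min_def max_def)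
    have "0 \<le> min X Y" "max X Y \<le> 1" using XY by (auto simp: I01_def)
    then obtain c where c: "c < R" "grid_cell R c \<subseteq> {min X Y..max X Y}"
      using interval_contains_grid_cell[OF \<open>R > 0\<close> _ far] by blast
    have "{min X Y..max X Y} = closed_segment X Y"
      by (simp add: closed_segment_eq_real_ivl min_def max_def)
    also have "\<dots> \<subseteq> (F m ^^ k) ` {a..b}"
      unfolding X_def Y_def Fk using closed_segment_subset_image_iter_comp[OF self_maps _ _ xy(1,2)] ab
      by (auto simp: I01_def)
    finally have "grid_cell R c \<subseteq> (F m ^^ k) ` {a..b}" using c(2) by blast
    then show ?thesis using c(1) \<open>k \<ge> 1\<close> unfolding covers_def by blast
  qed
  then show ?thesis using \<open>R > 0\<close> by blast
qed

text \<open>The separation \<eta> is the least one over the finitely many cells that return into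
  themselves and the residues t < P m of their return times P.\<close>
lemma eventually_uniformly_separated:
  "\<exists>\<eta>>0. \<forall>a b. 0 \<le> a \<longrightarrow> a < b \<longrightarrow> b \<le> 1 \<longrightarrow>
     (\<forall>\<^sub>F n in sequentially. \<exists>x\<in>{a..b}. \<exists>y\<in>{a..b}. \<bar>F n x - F n y\<bar> > \<eta>)"
proof -
  obtain R where "R > 0" and cover: "\<And>a b. 0 \<le> a \<Longrightarrow> a < b \<Longrightarrow> b \<le> 1 \<Longrightarrow>
      \<exists>c<R. covers (F m) {a..b} (grid_cell R c)"
    using interval_covers_grid_cell by blast
  have cell_cover: "\<exists>c'\<in>{..<R}. covers (F m) (grid_cell R c) (grid_cell R c')" if "c \<in> {..<R}" for c
    using cover[of "real c / real R" "(real c + 1) / real R"] grid_cell_bounds[of c R] that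
    unfolding grid_cell_def[of R c] by auto
  define periodic_cell where
    "periodic_cell c \<longleftrightarrow> c < R \<and> covers (F m) (grid_cell R c) (grid_cell R c)" for c
  have reach: "\<exists>c'. periodic_cell c' \<and> covers (F m) (grid_cell R c) (grid_cell R c')" if "c < R" for c
  proof -
    have "\<exists>c'\<in>{..<R}. covers (F m) (grid_cell R c) (grid_cell R c') \<and>
        covers (F m) (grid_cell R c') (grid_cell R c')"
      by (rule finite_transitive_reaches_loop[where r = "\<lambda>a b. covers (F m) (grid_cell R a) (grid_cell R b)"])
        (use that cell_cover in \<open>auto elim: covers_trans\<close>)
    then show ?thesis unfolding periodic_cell_def by auto
  qed
  have "\<forall>c. \<exists>P. periodic_cell c \<longrightarrow> P \<ge> 1 \<and> grid_cell R c \<subseteq> (F m ^^ P) ` grid_cell R c"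
    unfolding periodic_cell_def covers_def by blast
  then obtain P where P: "\<forall>c. periodic_cell c \<longrightarrow> P c \<ge> 1 \<and> grid_cell R c \<subseteq> (F m ^^ P c) ` grid_cell R c"
    by (rule choice[THEN exE])
  define S where "S = (SIGMA c:{c. periodic_cell c}. {..<P c * m})"
  have "{c. periodic_cell c} \<subseteq> {..<R}" by (auto simp: periodic_cell_def)
  then have "finite S" unfolding S_def by (auto intro: finite_subset)
  moreover have "\<exists>\<eta>>0. \<exists>p\<in>grid_cell R c. \<exists>q\<in>grid_cell R c. \<bar>F t p - F t q\<bar> > \<eta>"
    if "(c, t) \<in> S" for c t
  proof -
    have "c < R" using that by (simp add: S_def periodic_cell_def)
    then obtain p q where pq: "p \<in> grid_cell R c" "q \<in> grid_cell R c" "F t p \<noteq> F t q"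
      using iter_comp_nonconstant[of "real c / real R" "(real c + 1) / real R" t] grid_cell_bounds[of c R]
      by (auto simp: grid_cell_def)
    then have "\<bar>F t p - F t q\<bar> / 2 > 0" "\<bar>F t p - F t q\<bar> > \<bar>F t p - F t q\<bar> / 2" by auto
    then show ?thesis using pq(1,2) by blast
  qed
  moreover have "\<exists>p\<in>grid_cell R c. \<exists>q\<in>grid_cell R c. \<bar>F t p - F t q\<bar> > \<eta>'"
    if "\<exists>p\<in>grid_cell R c. \<exists>q\<in>grid_cell R c. \<bar>F t p - F t q\<bar> > \<eta>" "\<eta>' \<le> \<eta>" for c t \<eta> \<eta>'
    using that by (meson order.strict_trans1)
  ultimately obtain \<eta> where "\<eta> > 0"
    and separated: "\<forall>(c, t)\<in>S. \<exists>p\<in>grid_cell R c. \<exists>q\<in>grid_cell R c. \<bar>F t p - F t q\<bar> > \<eta>"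
    using finite_positive_lower_bound[of S
        "\<lambda>(c, t) \<eta>. \<exists>p\<in>grid_cell R c. \<exists>q\<in>grid_cell R c. \<bar>F t p - F t q\<bar> > \<eta>"]
    by (simp add: case_prod_beta) blast
  have "\<forall>\<^sub>F n in sequentially. \<exists>x\<in>{a..b}. \<exists>y\<in>{a..b}. \<bar>F n x - F n y\<bar> > \<eta>"
    if ab: "0 \<le> a" "a < b" "b \<le> 1" for a b
  proof -
    obtain c0 where "c0 < R" and cover0: "covers (F m) {a..b} (grid_cell R c0)"
      using cover ab by blast
    then obtain c where c: "periodic_cell c" and cover0c: "covers (F m) (grid_cell R c0) (grid_cell R c)"
      using reach by blast
    from covers_trans[OF cover0 cover0c] obtain K
    where K: "grid_cell R c \<subseteq> (F m ^^ K) ` {a..b}"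
      unfolding covers_def by blast
    have "\<exists>p\<in>grid_cell R c. \<exists>q\<in>grid_cell R c. \<bar>F t p - F t q\<bar> > \<eta>" if "t < P c * m" for t
      using separated that c by (auto simp: S_def)
    with K P c show ?thesis by (intro eventually_separated_if_periodic_set) auto
  qed
  then show ?thesis using \<open>\<eta> > 0\<close> by blast
qed

lemma cofinitely_sensitive: "cofinitely_sensitive f"
proof -
  obtain \<eta> where "\<eta> > 0" and sep: "\<And>a b. 0 \<le> a \<Longrightarrow> a < b \<Longrightarrow> b \<le> 1 \<Longrightarrow>
      \<forall>\<^sub>F n in sequentially. \<exists>x\<in>{a..b}. \<exists>y\<in>{a..b}. \<bar>F n x - F n y\<bar> > \<eta>"
    using eventually_uniformly_separated by auto
  have "\<forall>\<^sub>F n in sequentially. n \<in> Nset f U \<eta>"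
    if U: "openin (top_of_set I01) U" "U \<noteq> {}" for U
  proof -
    obtain a b where ab: "0 \<le> a" "a < b" "b \<le> 1" "{a..b} \<subseteq> U"
      using openin_I01_contains_interval[OF U] by blast
    have "\<forall>\<^sub>F n in sequentially. n \<ge> 1" by (rule eventually_ge_at_top)
    with sep[OF ab(1-3)] show ?thesis
    proof eventually_elim
      case (elim n)
      then show ?case using ab(4) unfolding Nset_def by blast
    qed
  qed
  then show ?thesis unfolding cofinitely_sensitive_def using \<open>\<eta> > 0\<close> by auto
qed

end

theorem theorem4p3:
  fixes f :: "nat \<Rightarrow> real \<Rightarrow> real" and m :: nat
  assumes "periodic_seq f m"
    and "cont_self_maps f"
    and "sensitive f"
  shows "syndetically_sensitive f \<and> ergodically_sensitive f \<and>
         collectively_sensitive f \<and> multi_sensitive f"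
proof -
  obtain \<delta> where "\<delta> > 0" and "\<forall>x\<in>I01. \<forall>U. openin (top_of_set I01) U \<and> x \<in> U \<longrightarrow>
      (\<exists>y\<in>U. \<exists>n\<ge>1. \<bar>iter_comp f n x - iter_comp f n y\<bar> > \<delta>)"
    using assms(3) unfolding sensitive_def by blast
  then interpret sensitive_periodic_system f m \<delta>
    using assms(1,2) by unfold_locales auto
  show ?thesis
    using cofinitely_sensitive_imp_syndetically_sensitive[OF cofinitely_sensitive]
      cofinitely_sensitive_imp_ergodically_sensitive[OF cofinitely_sensitive]
      cofinitely_sensitive_imp_multi_sensitive[OF cofinitely_sensitive]
      sensitive_imp_collectively_sensitive[OF assms(3)]
    by simp
qed

end
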